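(* Let particles occupy a finite connected set of nodes of the triangular grid, where every particle has ports $0,\dots,5$ with port $0$ leading East and port $3$ leading West for all particles, and ports $i$, $i+1 \bmod 6$ leading to adjacent nodes, the circular orientation of the other ports possibly differing between particles. Let $G$ be a grey component, and let $\{p,p'\}$ be a pair of particles of $G$ that are neighbours on at least one boundary of $G$, where boundaries of $G$ are taken with both endpoints of every dark blue edge treating the other endpoint as a non-particle node. Suppose every particle forwards messages along boundaries by the following procedure. If $p_s,p_1,p_2$ are consecutive particles on a boundary $B$, $o_1$ is the common non-particle neighbour of $p_s,p_1$ on $B$ and $o_2$ the common non-particle neighbour of $p_1,p_2$ on $B$, then when $p_s$ sends a message to $p_1$ it attaches as boundary-label the label, in $p_1$'s own port numbering, of the port of $p_1$ leading to $o_1$. When $p_1$ receives the message through its port $z$, it takes as next particle the first particle reached when following its ports in the cyclic order $z$, boundary-label, $\dots$ (call it $p_2$); it determines whether it has the same chirality as $p_2$ (via port labels of the edge $p_1p_2$ if it is a grey edge, or via the common occupied neighbour if it is a light blue edge). Letting $x$ be the port of $p_1$ to $p_2$, $y$ the port of $p_2$ to $p_1$, and $i$ the port of $p_1$ to $o_2$, $p_1$ computes $j = y+1 \bmod 6$ if ($p_1,p_2$ have the same chirality and $i = x-1 \bmod 6$) or (they have different chirality and $i = x+1 \bmod 6$), and $j = y-1 \bmod 6$ otherwise; it then sends the message to $p_2$ with boundary-label $j$. A particle originating a message chooses the boundary on which it sends it and attaches the boundary-label accordingly. Then any message passed from $p$ to $p'$ by this procedure always remains on the same boundary, i.e., the boundary-label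 received by $p'$ is the label (in $p'$'s numbering) of the port of $p'$ leading to the common non-particle neighbour of $p$ and $p'$ defining the boundary on which the message is being forwarded.
   Context: A local boundary is a pair $(uv,o)$ where $uv$ is an edge between particle nodes and $o$ is a non-particle node adjacent to both $u$ and $v$. A boundary is a cyclic sequence of local boundaries $(u_1u_2,o_1),(u_2u_3,o_2),\dots,(u_ku_1,o_k)$ such that, rotating around $u_i$ from $u_{i-1}$ to $u_{i+1}$, only non-particle nodes are encountered, starting with $o_{i-1}$ and ending with $o_i$ (possibly $o_{i-1}=o_i$); $u,v$ with $(uv,o)$ on it are neighbours on the boundary. A horizontal path consists of particles that lie on at least one boundary and are connected through their ports $0$ and $3$. An edge of a horizontal path between two particles with no common neighbouring particle is a dark blue edge; an edge of a horizontal path between two particles with exactly one common neighbouring particle is a light blue edge; all other edges between particles are grey edges. A grey component is a maximal set of particles connected by grey and light blue edges (not using dark blue edges). Two particles joined by a grey edge through ports $i$ and $i'$ have the same chirality iff $i+3 \equiv i' \pmod 6$. *)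

theory Defs
  imports Main
begin

type_synonym node = "int \<times> int"

text \<open>Axial coordinates. Directions 0..5 in counterclockwise order, direction 0 = East,
  direction 3 = West; consecutive directions lead to adjacent nodes.\<close>
definition dir :: "nat \<Rightarrow> int \<times> int" where
  "dir k = [(1,0),(0,1),(-1,1),(-1,0),(0,-1),(1,-1)] ! (k mod 6)"

definition step_node :: "node \<Rightarrow> nat \<Rightarrow> node" where
  "step_node u k = (fst u + fst (dir k), snd u + snd (dir k))"

definition adj :: "node \<Rightarrow> node \<Rightarrow> bool" where
  "adj u v \<longleftrightarrow> (\<exists>k<6. v = step_node u k)"

definition dir_to :: "node \<Rightarrow> node \<Rightarrow> nat" where
  "dir_to u v = (THE k. k < 6 \<and> v = step_node u k)"

definition connected_nodes :: "node set \<Rightarrow> bool" where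
  "connected_nodes P \<longleftrightarrow>
     (\<forall>u\<in>P. \<forall>v\<in>P. (u, v) \<in> {(a, b). a \<in> P \<and> b \<in> P \<and> adj a b}\<^sup>*)"

text \<open>ch u = True: ports of u are numbered counterclockwise; False: clockwise.
  In both cases port 0 leads East and port 3 leads West.\<close>
definition port_node :: "(node \<Rightarrow> bool) \<Rightarrow> node \<Rightarrow> nat \<Rightarrow> node" where
  "port_node ch u i = step_node u (if ch u then i mod 6 else (6 - i mod 6) mod 6)"

definition port_to :: "(node \<Rightarrow> bool) \<Rightarrow> node \<Rightarrow> node \<Rightarrow> nat" where
  "port_to ch u v = (THE i. i < 6 \<and> port_node ch u i = v)"

text \<open>V u w: node u regards (adjacent) node w as a particle node; S: set of particle nodes.\<close>

definition local_bd :: "(node \<Rightarrow> node \<Rightarrow> bool) \<Rightarrow> node set \<Rightarrow> node \<times> node \<times> node \<Rightarrow> bool" where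
  "local_bd V S t = (case t of (u, v, c) \<Rightarrow>
      u \<in> S \<and> v \<in> S \<and> adj u v \<and> V u v \<and> V v u \<and>
      adj u c \<and> adj v c \<and> \<not> V u c \<and> \<not> V v c)"

text \<open>Rotating around u from a to b, only non-particle nodes are encountered,
  the first being c1 and the last being c2.\<close>
definition rot_ok :: "(node \<Rightarrow> node \<Rightarrow> bool) \<Rightarrow> node \<Rightarrow> node \<Rightarrow> node \<Rightarrow> node \<Rightarrow> node \<Rightarrow> bool" where
  "rot_ok V a u b c1 c2 \<longleftrightarrow>
     (\<exists>d\<in>{1,5}. \<exists>n. 2 \<le> n \<and> n \<le> 6 \<and>
        step_node u (dir_to u a + d) = c1 \<and>
        step_node u (dir_to u a + d * (n - 1)) = c2 \<and>
        step_node u (dir_to u a + d * n) = b \<and>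
        (\<forall>m. 1 \<le> m \<and> m < n \<longrightarrow> \<not> V u (step_node u (dir_to u a + d * m))))"

text \<open>A boundary: cyclic list of local boundaries (u_i u_{i+1}, o_i).\<close>
definition is_boundary :: "(node \<Rightarrow> node \<Rightarrow> bool) \<Rightarrow> node set \<Rightarrow> (node \<times> node \<times> node) list \<Rightarrow> bool" where
  "is_boundary V S B \<longleftrightarrow> B \<noteq> [] \<and>
     (\<forall>t<length B. local_bd V S (B ! t)) \<and>
     (\<forall>t<length B. case B ! t of (u, v, c) \<Rightarrow>
        (case B ! ((t + 1) mod length B) of (u', v', c') \<Rightarrow>
           v = u' \<and> rot_ok V u v v' c c'))"

definition on_bd :: "node set \<Rightarrow> node \<Rightarrow> bool" where
  "on_bd P u \<longleftrightarrow> (\<exists>B. is_boundary (\<lambda>_ w. w \<in> P) P B \<and> (\<exists>v c. (u, v, c) \<in> set B))"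

definition hedge :: "node set \<Rightarrow> node \<Rightarrow> node \<Rightarrow> bool" where
  "hedge P u v \<longleftrightarrow> u \<in> P \<and> v \<in> P \<and> on_bd P u \<and> on_bd P v \<and>
     (v = step_node u 0 \<or> u = step_node v 0)"

definition common_nbrs :: "node set \<Rightarrow> node \<Rightarrow> node \<Rightarrow> node set" where
  "common_nbrs P u v = {w \<in> P. adj u w \<and> adj v w}"

definition dark_blue :: "node set \<Rightarrow> node \<Rightarrow> node \<Rightarrow> bool" where
  "dark_blue P u v \<longleftrightarrow> hedge P u v \<and> common_nbrs P u v = {}"

definition light_blue :: "node set \<Rightarrow> node \<Rightarrow> node \<Rightarrow> bool" where
  "light_blue P u v \<longleftrightarrow> hedge P u v \<and> card (common_nbrs P u v) = 1"

definition grey :: "node set \<Rightarrow> node \<Rightarrow> node \<Rightarrow> bool" where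
  "grey P u v \<longleftrightarrow> u \<in> P \<and> v \<in> P \<and> adj u v \<and> \<not> dark_blue P u v \<and> \<not> light_blue P u v"

definition grey_component :: "node set \<Rightarrow> node set \<Rightarrow> bool" where
  "grey_component P G \<longleftrightarrow>
     (\<exists>p\<in>P. G = {q. (p, q) \<in> {(u, v). grey P u v \<or> light_blue P u v}\<^sup>*})"

text \<open>View inside grey component G: endpoints of dark blue edges regard each other as
  non-particle nodes; nodes outside G are non-particle nodes.\<close>
definition GV :: "node set \<Rightarrow> node set \<Rightarrow> node \<Rightarrow> node \<Rightarrow> bool" where
  "GV P G u w \<longleftrightarrow> w \<in> G \<and> \<not> dark_blue P u w"

text \<open>p1 receives through port z with boundary-label b; c2 is the common non-particle
  neighbour of p1 and the next particle on the boundary. Returns (p2, j).\<close>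
definition fwd :: "(node \<Rightarrow> bool) \<Rightarrow> (node \<Rightarrow> node \<Rightarrow> bool) \<Rightarrow> node \<Rightarrow> nat \<Rightarrow> nat \<Rightarrow> node \<Rightarrow> node \<times> nat" where
  "fwd ch V p1 z b c2 =
    (let d = (b + 6 - z) mod 6;
         m = (LEAST m. 0 < m \<and> m \<le> 6 \<and> V p1 (port_node ch p1 (z + d * m)));
         x = (z + d * m) mod 6;
         p2 = port_node ch p1 x;
         y = port_to ch p2 p1;
         i = port_to ch p1 c2;
         same = (ch p1 = ch p2);
         j = (if (same \<and> i = (x + 5) mod 6) \<or> (\<not> same \<and> i = (x + 1) mod 6)
              then (y + 1) mod 6 else (y + 5) mod 6)
     in (p2, j))"

text \<open>Hop n of a message originated by the particle at position s of boundary B: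
  (sender, receiver, boundary-label).\<close>
fun msg :: "(node \<Rightarrow> bool) \<Rightarrow> (node \<Rightarrow> node \<Rightarrow> bool) \<Rightarrow> (node \<times> node \<times> node) list \<Rightarrow> nat \<Rightarrow> nat
            \<Rightarrow> node \<times> node \<times> nat" where
  "msg ch V B s 0 = (case B ! (s mod length B) of (u, v, c) \<Rightarrow> (u, v, port_to ch v c))"
| "msg ch V B s (Suc n) = (case msg ch V B s n of (ps, p1, b) \<Rightarrow>
     (case B ! ((s + n + 1) mod length B) of (_, _, c2) \<Rightarrow>
        (case fwd ch V p1 (port_to ch p1 ps) b c2 of (p2, j) \<Rightarrow> (p1, p2, j))))"

end

theory Submission
  imports Defs
begin

text \<open>The forwarding rule is local, so it suffices to check a single hop; the claim then follows
  by induction on the number of hops. Let \<open>p\<^sub>s, p\<^sub>1, p\<^sub>2\<close> be consecutive on the boundary and let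
  \<open>D\<close> be the grid direction from \<open>p\<^sub>1\<close> to \<open>p\<^sub>s\<close>. Rotating around \<open>p\<^sub>1\<close> in the sense
  \<open>d \<in> {1, 5}\<close> of the boundary one meets \<open>o\<^sub>1\<close> at \<open>D + d\<close>, then only non-particles up to
  \<open>o\<^sub>2\<close> at \<open>D + d(n - 1)\<close>, and \<open>p\<^sub>2\<close> at \<open>D + dn\<close>. Ports are directions up to the sign given
  by the chirality, so the difference of the boundary-label and the receiving port is that sign
  times \<open>d\<close>, and scanning ports in steps of this difference visits exactly the directions
  \<open>D + dm\<close>: the first particle found is \<open>p\<^sub>2\<close>. Seen from \<open>p\<^sub>2\<close>, the common neighbour \<open>o\<^sub>2\<close> lies
  next to \<open>p\<^sub>1\<close> in the same sense \<open>d\<close>, and the chirality case distinction of the rule computes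
  this sense in \<open>p\<^sub>2\<close>'s numbering.\<close>

lemma step_node_mod: "step_node u (k mod 6) = step_node u k"
  by (simp add: step_node_def dir_def)

lemma step_node_eq_iff: "step_node u a = step_node u b \<longleftrightarrow> a mod 6 = b mod 6"
proof
  assume "step_node u a = step_node u b"
  then have "dir (a mod 6) = dir (b mod 6)"
    by (simp add: step_node_def prod_eq_iff dir_def)
  moreover have "a mod 6 \<in> {0, 1, 2, 3, 4, 5}" "b mod 6 \<in> {0, 1, 2, 3, 4, 5}" by auto
  ultimately show "a mod 6 = b mod 6" by (auto simp: dir_def)
qed (metis step_node_mod)

lemma dir_to_step_node: "dir_to u (step_node u k) = k mod 6"
  unfolding dir_to_def by (rule the_equality) (auto simp: step_node_eq_iff)

lemma step_node_mod_add: "step_node u (k mod 6 + m) = step_node u (k + m)"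
  by (simp add: step_node_eq_iff mod_add_left_eq)

lemma step_node_opposite: "step_node (step_node u k) (k + 3) = u"
proof -
  have "k mod 6 \<in> {0, 1, 2, 3, 4, 5}" by auto
  then have "step_node (step_node u (k mod 6)) (k mod 6 + 3) = u"
    by (auto simp: step_node_def dir_def)
  then show ?thesis by (simp add: step_node_mod step_node_mod_add)
qed

lemma adj_step_node_dir_to: "adj a w \<Longrightarrow> a = step_node w (dir_to w a)"
  unfolding adj_def by (metis dir_to_step_node step_node_mod step_node_opposite)

lemma step_node_common_nbr:
  assumes "d \<in> {1, 5}"
  shows "step_node (step_node w (E + d)) (E + d + 3 + d) = step_node w E"
proof -
  have "E mod 6 \<in> {0, 1, 2, 3, 4, 5}" by auto
  then have "step_node (step_node w (E mod 6 + d)) (E mod 6 + (d + 3 + d)) = step_node w (E mod 6)"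
    using assms by (auto simp: step_node_def dir_def)
  then show ?thesis unfolding step_node_mod_add step_node_mod by (simp add: add.assoc)
qed

text \<open>Port \<open>k\<close> of a particle of chirality \<open>c\<close> leads in grid direction \<open>port_dir c k\<close>;
  since \<open>port_dir c\<close> is an involution, it also converts directions back to ports.\<close>
definition port_dir :: "bool \<Rightarrow> nat \<Rightarrow> nat" where
  "port_dir c k = (if c then k mod 6 else (6 - k mod 6) mod 6)"

lemma port_dir_less: "port_dir c k < 6"
  by (simp add: port_dir_def)

lemma port_dir_mod: "port_dir c (k mod 6) = port_dir c k"
  by (simp add: port_dir_def)

lemma port_dir_mod_add: "port_dir c (k mod 6 + m) = port_dir c (k + m)"
  by (simp add: port_dir_def mod_add_left_eq)

lemma port_dir_involution: "port_dir c (port_dir c k) = k mod 6"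
proof -
  have "k mod 6 \<in> {0, 1, 2, 3, 4, 5}" by auto
  then show ?thesis by (auto simp: port_dir_def)
qed

lemma port_node_eq_step_node: "port_node ch u i = step_node u (port_dir (ch u) i)"
  by (simp add: port_node_def port_dir_def)

lemma port_to_step_node: "port_to ch u (step_node u k) = port_dir (ch u) k"
  unfolding port_to_def
proof (rule the_equality)
  show "port_dir (ch u) k < 6 \<and> port_node ch u (port_dir (ch u) k) = step_node u k"
    by (simp add: port_dir_less port_node_eq_step_node port_dir_involution step_node_mod)
next
  fix i assume "i < 6 \<and> port_node ch u i = step_node u k"
  then have "i < 6" "port_dir (ch u) i = k mod 6"
    using port_dir_less[of "ch u" i] by (auto simp: port_node_eq_step_node step_node_eq_iff)
  then show "i = port_dir (ch u) k"
    by (metis port_dir_involution port_dir_mod mod_less)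
qed

lemma int_port_dir: "int (port_dir c k) = ((if c then 1 else -1) * int k) mod 6"
  by (auto simp: port_dir_def zmod_zminus1_eq_if of_nat_mod)

lemma port_dir_scan:
  "(port_dir c D + ((port_dir c (D + d) + 6 - port_dir c D) mod 6) * m) mod 6
     = port_dir c (D + d * m)"
proof -
  define \<sigma> :: int where "\<sigma> = (if c then 1 else -1)"
  define dd where "dd = (port_dir c (D + d) + 6 - port_dir c D) mod 6"
  have mod6: "(y mod 6 + 6 - a) mod 6 = (y - a) mod 6" for y a :: int
    by (metis add_diff_eq mod_add_self2 mod_diff_left_eq)
  have "int dd = (int (port_dir c (D + d)) + 6 - int (port_dir c D)) mod 6"
    using port_dir_less[of c D] by (simp add: dd_def of_nat_mod of_nat_diff)
  also have "\<dots> = (\<sigma> * int (D + d) - \<sigma> * int D) mod 6"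
    unfolding int_port_dir \<sigma>_def[symmetric] by (simp only: mod6 mod_diff_right_eq)
  finally have "int dd mod 6 = \<sigma> * int d mod 6"
    by (simp add: algebra_simps)
  then have "int (port_dir c D + dd * m) mod 6 = (\<sigma> * int D + \<sigma> * int d * int m) mod 6"
    unfolding of_nat_add of_nat_mult int_port_dir \<sigma>_def[symmetric]
    by (metis mod_add_cong mod_mod_trivial mod_mult_left_eq)
  also have "\<dots> = int (port_dir c (D + d * m))"
    by (simp add: int_port_dir \<sigma>_def[symmetric] algebra_simps)
  finally have "int ((port_dir c D + dd * m) mod 6) = int (port_dir c (D + d * m))"
    by (simp only: of_nat_mod of_nat_numeral)
  then show ?thesis unfolding dd_def of_nat_eq_iff .
qed

lemma port_dir_label_rule:
  assumes "d \<in> {1, 5}"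
  shows "(if (cw = cv \<and> port_dir cw E = (port_dir cw (E + d) + 5) mod 6)
            \<or> (cw \<noteq> cv \<and> port_dir cw E = (port_dir cw (E + d) + 1) mod 6)
          then (port_dir cv (E + d + 3) + 1) mod 6 else (port_dir cv (E + d + 3) + 5) mod 6)
         = port_dir cv (E + d + 3 + d)"
proof -
  have "E mod 6 \<in> {0, 1, 2, 3, 4, 5}" by auto
  then have "(if (cw = cv \<and> port_dir cw (E mod 6) = (port_dir cw (E mod 6 + d) + 5) mod 6)
            \<or> (cw \<noteq> cv \<and> port_dir cw (E mod 6) = (port_dir cw (E mod 6 + d) + 1) mod 6)
          then (port_dir cv (E mod 6 + (d + 3)) + 1) mod 6
          else (port_dir cv (E mod 6 + (d + 3)) + 5) mod 6)
         = port_dir cv (E mod 6 + (d + 3 + d))"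
    using assms by (cases cw; cases cv) (auto simp: port_dir_def)
  then show ?thesis unfolding port_dir_mod_add port_dir_mod add.assoc .
qed

lemma port_node_scan:
  "port_node ch w (port_dir (ch w) D + ((port_dir (ch w) (D + d) + 6 - port_dir (ch w) D) mod 6) * m)
     = step_node w (D + d * m)"
  by (metis port_dir_involution port_dir_mod port_dir_scan port_node_eq_step_node step_node_mod)

lemma fwd_first_particle_in_rotation:
  assumes d: "d \<in> {1, 5}" and n: "0 < n" "n \<le> 6"
    and hit: "V w (step_node w (D + d * n))"
    and gap: "\<forall>m. 0 < m \<and> m < n \<longrightarrow> \<not> V w (step_node w (D + d * m))"
  defines "c2 \<equiv> step_node w (D + d * (n - 1))" and "p2 \<equiv> step_node w (D + d * n)"
  shows "fwd ch V w (port_to ch w (step_node w D)) (port_to ch w (step_node w (D + d))) c2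
           = (p2, port_to ch p2 c2)"
proof -
  define E where "E = D + d * (n - 1)"
  have E: "D + d * n = E + d"
    using n by (cases n) (simp_all add: E_def algebra_simps)
  define cw where "cw = ch w"
  define dd where "dd = (port_dir cw (D + d) + 6 - port_dir cw D) mod 6"
  have scan: "port_node ch w (port_dir cw D + dd * m) = step_node w (D + d * m)" for m
    unfolding dd_def cw_def by (rule port_node_scan)
  have least: "(LEAST m. 0 < m \<and> m \<le> 6 \<and> V w (port_node ch w (port_dir cw D + dd * m))) = n"
  proof (rule Least_equality)
    show "0 < n \<and> n \<le> 6 \<and> V w (port_node ch w (port_dir cw D + dd * n))"
      using n hit by (simp add: scan)
  next
    fix m assume "0 < m \<and> m \<le> 6 \<and> V w (port_node ch w (port_dir cw D + dd * m))"
    then show "n \<le> m"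
      using gap by (metis scan not_le)
  qed
  have x: "(port_dir cw D + dd * n) mod 6 = port_dir cw (E + d)"
    unfolding dd_def E[symmetric] by (rule port_dir_scan)
  have next_particle: "port_node ch w (port_dir cw (E + d)) = p2"
    by (simp add: p2_def E port_node_eq_step_node port_dir_involution step_node_mod cw_def)
  have y: "port_to ch p2 w = port_dir (ch p2) (E + d + 3)"
    by (metis p2_def E step_node_opposite port_to_step_node)
  have i: "port_to ch w c2 = port_dir cw E"
    unfolding c2_def E_def[symmetric] cw_def by (rule port_to_step_node)
  have j: "port_to ch p2 c2 = port_dir (ch p2) (E + d + 3 + d)"
    by (metis c2_def E_def p2_def E d step_node_common_nbr port_to_step_node)
  show ?thesis
    unfolding fwd_def Let_def port_to_step_node cw_def[symmetric] dd_def[symmetric] least x next_particle y i j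
    using port_dir_label_rule[OF d, of cw "ch p2" E] by (simp only: prod.inject simp_thms)
qed

lemma is_boundary_consecutive:
  assumes "is_boundary V S B" and "t < length B"
    and "B ! t = (a, w, c)" and "B ! ((t + 1) mod length B) = (w', v', c')"
  shows "w' = w" and "adj a w" and "V w v'" and "rot_ok V a w v' c c'"
proof -
  have "(t + 1) mod length B < length B"
    using assms(2) by (intro mod_less_divisor) linarith
  then have "local_bd V S (a, w, c)" and "local_bd V S (w', v', c')"
    using assms unfolding is_boundary_def by metis+
  moreover have "w = w' \<and> rot_ok V a w v' c c'"
    using assms unfolding is_boundary_def by fastforce
  ultimately show "w' = w" "adj a w" "V w v'" "rot_ok V a w v' c c'"
    unfolding local_bd_def by auto
qed

lemma fwd_along_boundary:
  assumes "is_boundary V S B" and "t < length B"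
    and "B ! t = (a, w, c)" and "B ! ((t + 1) mod length B) = (w', v', c')"
  shows "fwd ch V w (port_to ch w a) (port_to ch w c) c' = (v', port_to ch v' c')"
proof -
  note consecutive = is_boundary_consecutive[OF assms]
  define D where "D = dir_to w a"
  have a: "a = step_node w D"
    unfolding D_def using consecutive(2) by (rule adj_step_node_dir_to)
  obtain d n where d: "d \<in> {1, 5}" and n: "2 \<le> n" "n \<le> 6"
    and c: "c = step_node w (D + d)" and c': "c' = step_node w (D + d * (n - 1))"
    and v': "v' = step_node w (D + d * n)"
    and gap: "\<forall>m. 1 \<le> m \<and> m < n \<longrightarrow> \<not> V w (step_node w (D + d * m))"
    using consecutive(4) unfolding rot_ok_def D_def[symmetric] by metis
  have "\<forall>m. 0 < m \<and> m < n \<longrightarrow> \<not> V w (step_node w (D + d * m))"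
    using gap by simp
  with d n consecutive(3) show ?thesis
    unfolding a c c' v' by (intro fwd_first_particle_in_rotation) simp_all
qed

lemma msg_on_boundary:
  assumes bd: "is_boundary V S B" and s: "s < length B"
  shows "msg ch V B s n = (case B ! ((s + n) mod length B) of (u, v, c) \<Rightarrow> (u, v, port_to ch v c))"
proof (induction n)
  case 0
  then show ?case using s by simp
next
  case (Suc n)
  define t where "t = (s + n) mod length B"
  have t: "t < length B"
    using s unfolding t_def by (intro mod_less_divisor) linarith
  have next_index: "Suc (s + n) mod length B = (t + 1) mod length B"
    by (simp add: t_def mod_Suc_eq)
  obtain a w c where Bt: "B ! t = (a, w, c)"
    by (metis prod_cases3)
  obtain w' v' c' where Bt': "B ! ((t + 1) mod length B) = (w', v', c')"
    by (metis prod_cases3)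
  have "msg ch V B s n = (a, w, port_to ch w c)"
    using Suc.IH Bt by (simp add: t_def)
  then have "msg ch V B s (Suc n) = (w, v', port_to ch v' c')"
    using fwd_along_boundary[OF bd t Bt Bt'] Bt' by (simp add: next_index)
  then show ?case
    using is_boundary_consecutive(1)[OF bd t Bt Bt'] next_index Bt' by simp
qed

theorem theorem2:
  fixes P G :: "node set" and ch :: "node \<Rightarrow> bool"
    and B :: "(node \<times> node \<times> node) list" and s n :: nat
  assumes "finite P" and "P \<noteq> {}" and "connected_nodes P"
    and "grey_component P G"
    and "is_boundary (GV P G) G B"
    and "s < length B"
  shows "msg ch (GV P G) B s n =
           (case B ! ((s + n) mod length B) of (u, v, c) \<Rightarrow> (u, v, port_to ch v c))"
  using assms(5,6) by (rule msg_on_boundary)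

end
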